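(* Let $n>1$ and let $\Omega_S$ be the set of all real $2\times 2n$ matrices of the form $A=\begin{bmatrix} w & 0\\ 0 & -w\end{bmatrix}$, $w\in\mathbb{R}^n$. Let $L(A)$ be the span of the rows of $A$, $L(\Omega_S)=\bigcup_{A\in\Omega_S}L(A)\subset\mathbb{R}^{2n}$, let $\mathcal{P}_{\Omega_S}$ be the set of all real polynomials in $2n$ variables vanishing identically on $L(\Omega_S)$, and let $\mathcal{N}_S=\bigcap_{p\in\mathcal{P}_{\Omega_S}}\{z\in\mathbb{R}^{2n}:p(z)=0\}$. Then \[ L(\Omega_S)=\overline{L(\Omega_S)}=\mathcal{N}_S, \] where the bar denotes closure in $\mathbb{R}^{2n}$. *)

theory Defs
  imports "HOL-Analysis.Analysis"
begin

text \<open>Real polynomial functions on real^'m (polynomials in CARD('m) variables,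
  identified with the functions they induce; over the reals this identification is faithful).\<close>
inductive real_polyfun :: "(real^'m \<Rightarrow> real) \<Rightarrow> bool" where
  const: "real_polyfun (\<lambda>x. c)"
| coord: "real_polyfun (\<lambda>x. x $ i)"
| add: "real_polyfun p \<Longrightarrow> real_polyfun q \<Longrightarrow> real_polyfun (\<lambda>x. p x + q x)"
| mult: "real_polyfun p \<Longrightarrow> real_polyfun q \<Longrightarrow> real_polyfun (\<lambda>x. p x * q x)"

text \<open>R^{2n} is modelled as real^('n + 'n): first block = Inl, second block = Inr.\<close>
definition OmegaS :: "(real^('n::finite + 'n)^2) set" where
  "OmegaS = {A. \<exists>w::real^'n.
      A = (\<chi> i j. if i = 1 then (case j of Inl k \<Rightarrow> w $ k | Inr k \<Rightarrow> 0)
                   else (case j of Inl k \<Rightarrow> 0 | Inr k \<Rightarrow> - (w $ k)))}"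

definition LA :: "real^('n::finite + 'n)^2 \<Rightarrow> (real^('n + 'n)) set" where
  "LA A = span (rows A)"

definition LOmegaS :: "(real^('n::finite + 'n)) set" where
  "LOmegaS = (\<Union>A\<in>OmegaS. LA A)"

definition POmegaS :: "(real^('n::finite + 'n) \<Rightarrow> real) set" where
  "POmegaS = {p. real_polyfun p \<and> (\<forall>z\<in>LOmegaS. p z = 0)}"

definition NS :: "(real^('n::finite + 'n)) set" where
  "NS = (\<Inter>p\<in>POmegaS. {z. p z = 0})"

end

theory Submission
  imports Defs
begin

text \<open>Writing \<open>z = (x, y)\<close> with \<open>x, y \<in> \<real>\<^sup>n\<close>, the span of the rows \<open>(w, 0)\<close> and \<open>(0, -w)\<close> consists
  of the \<open>(c w, d w)\<close>; so \<open>L(\<Omega>\<^sub>S)\<close> is the set of pairs with \<open>x\<close>, \<open>y\<close> linearly dependent, i.e. the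
  common zero set of the \<open>2 \<times> 2\<close> minors \<open>x\<^sub>i y\<^sub>j - x\<^sub>j y\<^sub>i\<close>. A common zero set of polynomials is
  closed, since polynomials are continuous, and coincides with the zero set of all polynomials
  vanishing on it.\<close>

lemma real_polyfun_continuous: "real_polyfun p \<Longrightarrow> continuous_on UNIV p"
  by (induction rule: real_polyfun.induct) (auto intro: continuous_intros)

lemma real_polyfun_diff:
  assumes "real_polyfun p" "real_polyfun q"
  shows "real_polyfun (\<lambda>x. p x - q x)"
proof -
  have "real_polyfun (\<lambda>x. p x + (\<lambda>x. -1) x * q x)"
    using assms by (intro real_polyfun.intros)
  then show ?thesis by simp
qed

lemma closed_common_zeros_real_polyfun:
  assumes "\<forall>q\<in>Q. real_polyfun q"
  shows "closed {z. \<forall>q\<in>Q. q z = 0}"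
proof -
  have "{z. \<forall>q\<in>Q. q z = 0} = (\<Inter>q\<in>Q. q -` {0})" by auto
  moreover have "closed (q -` {0})" if "q \<in> Q" for q
    using that assms real_polyfun_continuous by (intro closed_vimage) auto
  ultimately show ?thesis by auto
qed

lemma common_zeros_of_vanishing_real_polyfuns:
  fixes S :: "(real^'m) set"
  assumes "\<forall>q\<in>Q. real_polyfun q" and "S = {z. \<forall>q\<in>Q. q z = 0}"
  shows "(\<Inter>p\<in>{p. real_polyfun p \<and> (\<forall>z\<in>S. p z = 0)}. {z. p z = 0}) = S"
  using assms by blast

lemma ex_common_multiple_iff_minors_eq:
  fixes x y :: "'a::field^'n"
  shows "(\<exists>w c d. x = c *s w \<and> y = d *s w) \<longleftrightarrow> (\<forall>i j. x$i * y$j = x$j * y$i)"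
proof
  assume "\<exists>w c d. x = c *s w \<and> y = d *s w"
  then show "\<forall>i j. x$i * y$j = x$j * y$i" by auto
next
  assume minors: "\<forall>i j. x$i * y$j = x$j * y$i"
  show "\<exists>w c d. x = c *s w \<and> y = d *s w"
  proof (cases "x = 0")
    case True
    then have "x = 0 *s y \<and> y = 1 *s y" by simp
    then show ?thesis by blast
  next
    case False
    then obtain i where "x$i \<noteq> 0" by (auto simp: vec_eq_iff)
    \<comment> \<open>\<open>y\<^sub>j = (y\<^sub>i / x\<^sub>i) x\<^sub>j\<close> is the minor for \<open>i, j\<close> divided by \<open>x\<^sub>i\<close>\<close>
    with minors have "y = (y$i / x$i) *s x"
      by (auto simp: vec_eq_iff field_simps)
    then have "x = 1 *s x \<and> y = (y$i / x$i) *s x" by simp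
    then show ?thesis by blast
  qed
qed

lemma rows_2: "rows (A :: 'a^'m^2) = {row 1 A, row 2 A}"
  by (auto simp: rows_def) (metis exhaust_2)

lemma row_if_1_2:
  "row 1 (\<chi> i. if i = (1::2) then a else b) = a"
  "row 2 (\<chi> i. if i = (1::2) then a else b) = b"
  by (simp_all add: row_def)

lemma span_pair: "span {a, b} = {c *\<^sub>R a + d *\<^sub>R b | c d. True}"
proof (intro antisym subsetI)
  fix x assume "x \<in> span {a, b}"
  then obtain c d where "x - c *\<^sub>R a = d *\<^sub>R b"
    by (auto simp: span_breakdown_eq span_singleton)
  then have "x = c *\<^sub>R a + d *\<^sub>R b" by (simp add: algebra_simps)
  then show "x \<in> {c *\<^sub>R a + d *\<^sub>R b | c d. True}" by blast
next
  fix x assume "x \<in> {c *\<^sub>R a + d *\<^sub>R b | c d. True}"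
  then show "x \<in> span {a, b}"
    by (auto intro: span_add span_scale span_base)
qed

definition block_vec :: "'a^'n \<Rightarrow> 'a^'n \<Rightarrow> 'a^('n::finite + 'n)" where
  "block_vec x y = (\<chi> j. case j of Inl k \<Rightarrow> x $ k | Inr k \<Rightarrow> y $ k)"

lemma block_vec_nth [simp]:
  "block_vec x y $ Inl k = x $ k"
  "block_vec x y $ Inr k = y $ k"
  by (simp_all add: block_vec_def)

lemma lincomb_block_vec:
  "c *\<^sub>R block_vec x y + d *\<^sub>R block_vec u v
    = block_vec (c *\<^sub>R x + d *\<^sub>R u) (c *\<^sub>R y + d *\<^sub>R v)"
  by (simp add: vec_eq_iff block_vec_def split: sum.split)

lemma OmegaS_eq_range:
  "(OmegaS :: (real^('n::finite + 'n)^2) set)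
    = range (\<lambda>w. \<chi> i. if i = 1 then block_vec w 0 else block_vec 0 (- w))"
  unfolding OmegaS_def block_vec_def
  by (auto simp: vec_eq_iff split: sum.split)

lemma LOmegaS_eq_UN_span:
  "(LOmegaS :: (real^('n::finite + 'n)) set)
    = (\<Union>w. span {block_vec w 0, block_vec 0 (- w)})"
  unfolding LOmegaS_def LA_def OmegaS_eq_range rows_2 by (simp add: row_if_1_2)

lemma span_block_rows:
  "span {block_vec w 0, block_vec 0 (- w)} = {block_vec (c *\<^sub>R w) (d *\<^sub>R w) | c d. True}"
proof -
  have "c *\<^sub>R block_vec w 0 + d *\<^sub>R block_vec 0 (- w) = block_vec (c *\<^sub>R w) ((- d) *\<^sub>R w)"
    for c d :: real
    by (simp add: lincomb_block_vec)
  then show ?thesis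
    unfolding span_pair by (metis (no_types, opaque_lifting) minus_minus)
qed

lemma LOmegaS_eq_multiples:
  "(LOmegaS :: (real^('n::finite + 'n)) set)
    = {block_vec (c *\<^sub>R w) (d *\<^sub>R w) | w c d. True}"
  unfolding LOmegaS_eq_UN_span span_block_rows by blast

lemma eq_block_vec_iff:
  "z = block_vec x y \<longleftrightarrow> (\<chi> k. z $ Inl k) = x \<and> (\<chi> k. z $ Inr k) = y"
  by (auto simp: vec_eq_iff block_vec_def split: sum.split)

definition block_minors :: "(real^('n::finite + 'n) \<Rightarrow> real) set" where
  "block_minors = {(\<lambda>z. z $ Inl i * z $ Inr j - z $ Inl j * z $ Inr i) | i j. True}"

lemma real_polyfun_block_minors: "\<forall>q\<in>block_minors. real_polyfun q"
  unfolding block_minors_def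
  by (auto intro!: real_polyfun_diff real_polyfun.mult real_polyfun.coord)

lemma LOmegaS_eq_common_zeros_block_minors:
  "(LOmegaS :: (real^('n::finite + 'n)) set) = {z. \<forall>q\<in>block_minors. q z = 0}"
proof -
  have "z \<in> LOmegaS \<longleftrightarrow>
      (\<exists>w c d. (\<chi> k. z $ Inl k) = c *s w \<and> (\<chi> k. z $ Inr k) = d *s w)"
    for z :: "real^('n + 'n)"
    unfolding LOmegaS_eq_multiples by (simp add: eq_block_vec_iff scalar_mult_eq_scaleR)
  moreover have "(\<forall>q\<in>block_minors. q z = 0) \<longleftrightarrow>
      (\<forall>i j. z $ Inl i * z $ Inr j = z $ Inl j * z $ Inr i)" for z :: "real^('n + 'n)"
    unfolding block_minors_def by force
  ultimately show ?thesis
    unfolding ex_common_multiple_iff_minors_eq by auto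
qed

theorem theorem4p2:
  assumes "CARD('n::finite) > 1"
  shows "(LOmegaS :: (real^('n + 'n)) set) = closure LOmegaS \<and> closure (LOmegaS :: (real^('n + 'n)) set) = NS"
proof -
  have closed: "closed (LOmegaS :: (real^('n + 'n)) set)"
    unfolding LOmegaS_eq_common_zeros_block_minors
    using real_polyfun_block_minors by (rule closed_common_zeros_real_polyfun)
  have "(NS :: (real^('n + 'n)) set) = LOmegaS"
    unfolding NS_def POmegaS_def
    using real_polyfun_block_minors LOmegaS_eq_common_zeros_block_minors
    by (rule common_zeros_of_vanishing_real_polyfuns)
  with closed show ?thesis
    by (simp add: closure_closed)
qed

end
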